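(* Let $k\ge2$, $n\ge1$ be integers, let $\bar{\mathcal{P}}\in\mathbb{R}^{[k,n]}$ be a columnwise-substochastic tensor, $\mathbf{v}\in\mathbb{R}^n$ a stochastic vector and $\alpha\in[0,1)$. Let $\Delta:=\{\mathbf{y}\in\mathbb{R}^n_+:\mathbf{e}^T\mathbf{y}\le(1-\alpha)^{-\frac{1}{k-1}}\}$ and let $\mathbf{y}_c\in\Delta$. Then the equation $(\mathbf{e}^T\mathbf{y}_{c+1})^{k-2}\mathbf{y}_{c+1}=\alpha\bar{\mathcal{P}}\mathbf{y}_c^{k-1}+\mathbf{v}$ in the unknown $\mathbf{y}_{c+1}$ has the closed-form solution $$\mathbf{y}_{c+1}=\left(1+\alpha\mathbf{e}^T(\bar{\mathcal{P}}\mathbf{y}_c^{k-1})\right)^{-\frac{k-2}{k-1}}\left(\alpha\bar{\mathcal{P}}\mathbf{y}_c^{k-1}+\mathbf{v}\right)\in\Delta,$$ which is exactly $\mathbf{y}_{c+1}=\Phi(\mathbf{y}_c)$, where $\Phi(\mathbf{y}):=(1+\alpha\mathbf{e}^T(\bar{\mathcal{P}}\mathbf{y}^{k-1}))^{-\frac{k-2}{k-1}}(\mathbf{v}+\alpha\bar{\mathcal{P}}\mathbf{y}^{k-1})$.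
   Context: For $\mathcal{P}\in\mathbb{R}^{[k,n]}$ (real tensors of order $k$, dimension $n$) and $\mathbf{y}\in\mathbb{R}^n$, $(\mathcal{P}\mathbf{y}^{k-1})_i=\sum_{i_2,\dots,i_k}p_{i i_2\dots i_k}y_{i_2}\cdots y_{i_k}$. $\bar{\mathcal{P}}$ is columnwise-substochastic if its entries are nonnegative and $\sum_{i}\bar p_{i i_2\dots i_k}\le1$ for all $i_2,\dots,i_k$. $\mathbf{e}$ is the all-ones vector; a stochastic vector is nonnegative with entries summing to $1$. The left-hand side $(\mathbf{e}^T\mathbf{y})^{k-2}\mathbf{y}$ equals $(I\circ\mathbf{e}^{\circ(k-2)})\mathbf{y}^{k-1}$, where $I\circ\mathbf{e}^{\circ(k-2)}$ is the tensor with entries $\delta_{i_1i_2}$. *)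

theory Defs
  imports Complex_Main
begin

text \<open>Coordinates are indexed by a finite type 'n (so n = CARD('n) >= 1).
  A real tensor of order k and dimension n is P :: 'n => 'n list => real,
  where P i js is the entry p_{i i_2 ... i_k} for js = [i_2,...,i_k] of length k-1
  (values at other list lengths are irrelevant).\<close>

definition tapply :: "nat \<Rightarrow> ('n::finite \<Rightarrow> 'n list \<Rightarrow> real) \<Rightarrow> ('n \<Rightarrow> real) \<Rightarrow> 'n \<Rightarrow> real" where
  "tapply k P y i = (\<Sum>js\<in>{js. length js = k - 1}. P i js * prod_list (map y js))"

definition col_substochastic :: "nat \<Rightarrow> ('n::finite \<Rightarrow> 'n list \<Rightarrow> real) \<Rightarrow> bool" where
  "col_substochastic k P \<longleftrightarrow>
     (\<forall>i js. length js = k - 1 \<longrightarrow> 0 \<le> P i js) \<and>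
     (\<forall>js. length js = k - 1 \<longrightarrow> (\<Sum>i\<in>UNIV. P i js) \<le> 1)"

definition esum :: "('n::finite \<Rightarrow> real) \<Rightarrow> real" where
  "esum y = (\<Sum>i\<in>UNIV. y i)"

definition stochastic :: "('n::finite \<Rightarrow> real) \<Rightarrow> bool" where
  "stochastic v \<longleftrightarrow> (\<forall>i. 0 \<le> v i) \<and> esum v = 1"

definition Delta :: "nat \<Rightarrow> real \<Rightarrow> ('n::finite \<Rightarrow> real) set" where
  "Delta k \<alpha> = {y. (\<forall>i. 0 \<le> y i) \<and> esum y \<le> (1 - \<alpha>) powr (- 1 / (real k - 1))}"

definition Phi :: "nat \<Rightarrow> real \<Rightarrow> ('n::finite \<Rightarrow> 'n list \<Rightarrow> real) \<Rightarrow> ('n \<Rightarrow> real) \<Rightarrow> ('n \<Rightarrow> real) \<Rightarrow> 'n \<Rightarrow> real" where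
  "Phi k \<alpha> P v y = (\<lambda>i. (1 + \<alpha> * esum (tapply k P y)) powr (- (real k - 2) / (real k - 1))
                         * (v i + \<alpha> * tapply k P y i))"

end

theory Submission
  imports Defs
begin

text \<open>Put \<open>w = \<alpha> P y\<^sub>c\<^sup>k\<^sup>-\<^sup>1 + v\<close> and \<open>T = e\<^sup>T w = 1 + \<alpha> e\<^sup>T(P y\<^sub>c\<^sup>k\<^sup>-\<^sup>1)\<close>. The equation
  \<open>(e\<^sup>T y)^(k-2) y = w\<close> makes \<open>y\<close> a multiple \<open>c w\<close>; summing gives \<open>c (c T)^(k-2) = 1\<close>, so
  \<open>c = T^(-(k-2)/(k-1))\<close> and \<open>e\<^sup>T y = T^(1/(k-1))\<close>. Column substochasticity gives
  \<open>e\<^sup>T(P y\<^sub>c\<^sup>k\<^sup>-\<^sup>1) \<le> (e\<^sup>T y\<^sub>c)^(k-1) \<le> 1/(1-\<alpha>)\<close>, hence \<open>T \<le> 1/(1-\<alpha>)\<close>, which is the bound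
  defining \<open>\<Delta>\<close> raised to the power \<open>k-1\<close>.\<close>

lemma sum_prod_list_lists_length:
  fixes f :: "'a \<Rightarrow> 'b::comm_semiring_1"
  assumes "finite A"
  shows "(\<Sum>xs\<in>{xs. set xs \<subseteq> A \<and> length xs = n}. prod_list (map f xs)) = sum f A ^ n"
proof (induction n)
  case 0
  have "{xs. set xs \<subseteq> A \<and> length xs = 0} = {[]}"
    by auto
  then show ?case by simp
next
  case (Suc n)
  have "(\<Sum>xs\<in>{xs. set xs \<subseteq> A \<and> length xs = Suc n}. prod_list (map f xs))
      = (\<Sum>(xs, x)\<in>{xs. set xs \<subseteq> A \<and> length xs = n} \<times> A. f x * prod_list (map f xs))"
    unfolding lists_length_Suc_eq by (subst sum.reindex) (auto simp: inj_split_Cons case_prod_beta)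
  also have "\<dots> = (\<Sum>xs\<in>{xs. set xs \<subseteq> A \<and> length xs = n}. \<Sum>x\<in>A. f x * prod_list (map f xs))"
    by (rule sum.cartesian_product[symmetric])
  also have "\<dots> = (\<Sum>xs\<in>{xs. set xs \<subseteq> A \<and> length xs = n}. prod_list (map f xs)) * sum f A"
    by (simp add: sum_distrib_left sum_distrib_right mult.commute)
  finally show ?case
    using Suc.IH by (simp add: mult.commute)
qed

lemma esum_scale: "esum (\<lambda>i. c * y i) = c * esum y"
  by (simp add: esum_def sum_distrib_left)

lemma esum_nonneg: "(\<And>i. 0 \<le> y i) \<Longrightarrow> 0 \<le> esum y"
  by (simp add: esum_def sum_nonneg)

lemma tapply_nonneg:
  assumes "col_substochastic k P" and "\<And>i. 0 \<le> y i"
  shows "0 \<le> tapply k P y i"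
  using assms unfolding tapply_def col_substochastic_def
  by (intro sum_nonneg mult_nonneg_nonneg prod_list_nonneg) auto

lemma esum_tapply_le:
  assumes "col_substochastic k P" and "\<And>i. 0 \<le> y i"
  shows "esum (tapply k P y) \<le> esum y ^ (k - 1)"
proof -
  let ?L = "{js::'a list. length js = k - 1}"
  have "esum (tapply k P y) = (\<Sum>js\<in>?L. (\<Sum>i\<in>UNIV. P i js) * prod_list (map y js))"
    unfolding esum_def tapply_def by (subst sum.swap) (simp add: sum_distrib_right)
  also have "\<dots> \<le> (\<Sum>js\<in>?L. prod_list (map y js))"
    using assms unfolding col_substochastic_def
    by (intro sum_mono mult_left_le_one_le prod_list_nonneg) (auto intro: sum_nonneg)
  also have "\<dots> = esum y ^ (k - 1)"
    using sum_prod_list_lists_length[of "UNIV :: 'a set" y "k - 1"] by (simp add: esum_def)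
  finally show ?thesis .
qed

lemma le_powr_neg_inverse_iff:
  fixes x a :: real
  assumes "0 \<le> x" and "0 < a" and "0 < m"
  shows "x \<le> a powr (- 1 / real m) \<longleftrightarrow> x ^ m \<le> inverse a"
proof -
  have "a powr (- 1 / real m) = root m (inverse a)"
    using assms by (simp add: root_powr_inverse powr_minus_divide inverse_eq_divide powr_divide)
  moreover have "x = root m (x ^ m)"
    using assms by (simp add: real_root_power_cancel)
  ultimately show ?thesis
    using assms(3) by (metis real_root_le_iff)
qed

lemma homogeneous_equation_closed_form:
  fixes w :: "'n::finite \<Rightarrow> real"
  assumes "2 \<le> k" and "0 < esum w"
  defines "y \<equiv> \<lambda>i. esum w powr (- (real k - 2) / (real k - 1)) * w i"
  shows "esum y ^ (k - 1) = esum w" and "esum y ^ (k - 2) * y i = w i"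
proof -
  let ?T = "esum w" and ?r = "real k - 1"
  have r_pos: "0 < ?r"
    using assms(1) by simp
  have "esum y = ?T powr (- (real k - 2) / ?r + 1)"
    using assms(2) by (simp add: y_def esum_scale powr_add)
  also have "- (real k - 2) / ?r + 1 = 1 / ?r"
    using r_pos by (simp add: field_simps)
  finally have esum_y: "esum y = ?T powr (1 / ?r)" .
  have power_esum_y: "esum y ^ m = ?T powr (real m / ?r)" for m
    using assms(2) by (simp add: esum_y powr_realpow[symmetric] powr_powr)
  show "esum y ^ (k - 1) = ?T"
    using assms(1,2) r_pos by (simp add: power_esum_y of_nat_diff)
  have "esum y ^ (k - 2) * y i = ?T powr (real (k - 2) / ?r) * ?T powr (- (real k - 2) / ?r) * w i"
    unfolding power_esum_y by (simp add: y_def)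
  also have "\<dots> = w i"
    using assms(1,2) by (simp add: of_nat_diff powr_add[symmetric] add_divide_distrib[symmetric])
  finally show "esum y ^ (k - 2) * y i = w i" .
qed

lemma mem_Delta_iff_power:
  assumes "2 \<le> k" and "\<alpha> < 1"
  shows "y \<in> Delta k \<alpha> \<longleftrightarrow> (\<forall>i. 0 \<le> y i) \<and> esum y ^ (k - 1) \<le> inverse (1 - \<alpha>)"
proof -
  have "real k - 1 = real (k - 1)" and "0 < k - 1"
    using assms(1) by (auto simp: of_nat_diff)
  then show ?thesis
    using le_powr_neg_inverse_iff[of "esum y" "1 - \<alpha>" "k - 1"] assms(2)
    by (auto simp: Delta_def esum_nonneg)
qed

lemma one_plus_esum_tapply_le_on_Delta:
  assumes "2 \<le> k" and "col_substochastic k P" and "0 \<le> \<alpha>" and "\<alpha> < 1" and "y \<in> Delta k \<alpha>"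
  shows "1 + \<alpha> * esum (tapply k P y) \<le> inverse (1 - \<alpha>)"
proof -
  have y: "\<And>i. 0 \<le> y i" "esum y ^ (k - 1) \<le> inverse (1 - \<alpha>)"
    using assms(5) by (simp_all add: mem_Delta_iff_power[OF assms(1,4)])
  have "esum (tapply k P y) \<le> inverse (1 - \<alpha>)"
    using esum_tapply_le[OF assms(2)] y by (blast intro: order_trans)
  then have "\<alpha> * esum (tapply k P y) \<le> \<alpha> * inverse (1 - \<alpha>)"
    using assms(3) by (rule mult_left_mono)
  then show ?thesis
    using assms(4) by (simp add: field_simps)
qed

lemma esum_affine_tapply:
  assumes "stochastic v"
  shows "esum (\<lambda>i. \<alpha> * tapply k P y i + v i) = 1 + \<alpha> * esum (tapply k P y)"
  using assms by (simp add: stochastic_def esum_def sum.distrib sum_distrib_left)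

theorem lemma4p1:
  fixes k :: nat and P :: "'n::finite \<Rightarrow> 'n list \<Rightarrow> real" and v yc :: "'n \<Rightarrow> real" and \<alpha> :: real
  assumes "k \<ge> 2"
    and "col_substochastic k P"
    and "stochastic v"
    and "0 \<le> \<alpha>" and "\<alpha> < 1"
    and "yc \<in> Delta k \<alpha>"
  shows "let w = (\<lambda>i. \<alpha> * tapply k P yc i + v i);
             y' = (\<lambda>i. (1 + \<alpha> * esum (tapply k P yc)) powr (- (real k - 2) / (real k - 1)) * w i)
         in (\<forall>i. esum y' ^ (k - 2) * y' i = w i) \<and> y' \<in> Delta k \<alpha> \<and> y' = Phi k \<alpha> P v yc"
proof -
  define w where "w = (\<lambda>i. \<alpha> * tapply k P yc i + v i)"
  define y' where "y' = (\<lambda>i. esum w powr (- (real k - 2) / (real k - 1)) * w i)"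
  have esum_w: "esum w = 1 + \<alpha> * esum (tapply k P yc)"
    unfolding w_def using assms(3) by (rule esum_affine_tapply)
  have yc_nonneg: "0 \<le> yc i" for i
    using assms(6) by (simp add: Delta_def)
  have tapply_yc_nonneg: "0 \<le> tapply k P yc i" for i
    using assms(2) yc_nonneg by (rule tapply_nonneg)
  then have w_nonneg: "0 \<le> w i" for i
    using assms(3,4) by (simp add: w_def stochastic_def)
  have esum_w_pos: "0 < esum w"
    using esum_w esum_nonneg[of "tapply k P yc", OF tapply_yc_nonneg] assms(4) by (simp add: add_pos_nonneg)
  have "esum y' ^ (k - 1) = esum w"
    unfolding y'_def using assms(1) esum_w_pos by (rule homogeneous_equation_closed_form(1))
  then have "y' \<in> Delta k \<alpha>"
    using esum_w one_plus_esum_tapply_le_on_Delta[OF assms(1,2,4,5,6)] w_nonneg esum_w_pos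
    by (simp add: mem_Delta_iff_power[OF assms(1,5)] y'_def)
  moreover have "\<forall>i. esum y' ^ (k - 2) * y' i = w i"
    unfolding y'_def using assms(1) esum_w_pos by (blast intro: homogeneous_equation_closed_form(2))
  ultimately show ?thesis
    using esum_w by (simp add: Let_def Phi_def y'_def w_def add.commute)
qed

end
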